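(* Let $p_1,p_2,p_3,\dots=2,3,5,7,\dots$ be the list of all primes, $T=\bigoplus_{n\in\mathbb N}\mathbb Z(p_n^n)$, $P=\prod_{n\in\mathbb N}\mathbb Z(p_n^n)$, and $\mathbf z\in P$ the element whose $n$-th coordinate is $1\in\mathbb Z(p_n^n)$ for every $n$. Let $G=\{\mathbf y\in P:\ k\mathbf y\in T+\mathbb Z\mathbf z \text{ for some integer } k\neq 0\}$, the purification of $T+\mathbb Z\mathbf z$ in $P$, so that $G$ is pure in $P$, $T$ is the torsion subgroup of $G$, and $G/T\cong\mathbb Q$. Then $G$ is strongly co-Hopfian and $G/T$ is strongly co-Hopfian, but $T$ is not strongly co-Hopfian; in particular $G$ is strongly co-Hopfian but not uniformly strongly co-Hopfian.
   Context: All groups are abelian. A group $G$ is strongly co-Hopfian if for every endomorphism $f$ of $G$ there is $n\in\mathbb N$ with $f^n(G)=f^{n+1}(G)$; it is uniformly strongly co-Hopfian if there is a fixed $m$ with $\phi^m(G)=\phi^{m+1}(G)$ for all endomorphisms $\phi$. $\mathbb Z(q)$ denotes the cyclic group of order $q$. *)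

theory Defs
  imports "HOL-Algebra.Algebra" "HOL-Computational_Algebra.Primes" "HOL-Library.Infinite_Set"
begin

text \<open>Abelian groups are HOL-Algebra group records, written multiplicatively
(the operation \<open>mult\<close> plays the role of +). Endomorphisms are elements of \<open>hom H H\<close>.\<close>

definition strongly_coHopfian :: "('a, 'b) monoid_scheme \<Rightarrow> bool" where
  "strongly_coHopfian H \<longleftrightarrow>
     (\<forall>f \<in> hom H H. \<exists>n::nat. (f ^^ n) ` carrier H = (f ^^ Suc n) ` carrier H)"

definition uniformly_strongly_coHopfian :: "('a, 'b) monoid_scheme \<Rightarrow> bool" where
  "uniformly_strongly_coHopfian H \<longleftrightarrow>
     (\<exists>m::nat. \<forall>f \<in> hom H H. (f ^^ m) ` carrier H = (f ^^ Suc m) ` carrier H)"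

text \<open>The i-th prime (0-indexed): nth_prime 0 = 2, nth_prime 1 = 3, ...\<close>
definition nth_prime :: "nat \<Rightarrow> nat" where
  "nth_prime i = enumerate {p::nat. Factorial_Ring.prime p} i"

text \<open>Coordinate i (i = 0,1,2,...) corresponds to the paper's index n = i+1:
  the cyclic group Z(p_n^n) with p_n = nth_prime i, n = i+1.\<close>
definition ord_q :: "nat \<Rightarrow> int" where
  "ord_q i = int (nth_prime i ^ Suc i)"

definition Pgrp :: "(nat \<Rightarrow> int) monoid" where
  "Pgrp = \<lparr> partial_object.carrier = {y. \<forall>i. 0 \<le> y i \<and> y i < ord_q i},
            monoid.mult = (\<lambda>x y i. (x i + y i) mod ord_q i),
            monoid.one = (\<lambda>i. 0) \<rparr>"

definition smulP :: "int \<Rightarrow> (nat \<Rightarrow> int) \<Rightarrow> (nat \<Rightarrow> int)" where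
  "smulP k y = (\<lambda>i. (k * y i) mod ord_q i)"

definition Tset :: "(nat \<Rightarrow> int) set" where
  "Tset = {y \<in> carrier Pgrp. finite {i. y i \<noteq> 0}}"

definition zP :: "nat \<Rightarrow> int" where
  "zP = (\<lambda>i. 1 mod ord_q i)"

definition TZz :: "(nat \<Rightarrow> int) set" where
  "TZz = {(\<lambda>i. (t i + m * zP i) mod ord_q i) | t m. t \<in> Tset}"

definition Gset :: "(nat \<Rightarrow> int) set" where
  "Gset = {y \<in> carrier Pgrp. \<exists>k::int. k \<noteq> 0 \<and> smulP k y \<in> TZz}"

definition Ggrp :: "(nat \<Rightarrow> int) monoid" where
  "Ggrp = Pgrp\<lparr>carrier := Gset\<rparr>"

definition Tgrp :: "(nat \<Rightarrow> int) monoid" where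
  "Tgrp = Pgrp\<lparr>carrier := Tset\<rparr>"

end

theory Submission
  imports Defs "HOL-Number_Theory.Modular_Inverse"
begin

text \<open>
  Everything is computed coordinatewise modulo \<open>q\<^sub>i = p\<^sub>i ^ (i + 1)\<close>. An element \<open>y\<close> of \<open>P\<close>
  lies in \<open>G\<close> iff some multiple \<open>k y\<close> with \<open>k \<noteq> 0\<close> is constant in almost all coordinates.
  Since a nonzero integer is prime to almost all \<open>q\<^sub>i\<close>, \<open>G\<close> is closed under coordinatewise
  multiplication, and every \<open>a \<in> G\<close> is, in almost all coordinates, either \<open>0\<close> or a unit.
  An element of \<open>G\<close> vanishing at coordinate \<open>i\<close> is divisible by \<open>q\<^sub>i\<close> in \<open>G\<close>, so an
  endomorphism \<open>f\<close> of \<open>G\<close> computes \<open>(f y)\<^sub>i\<close> from \<open>y\<^sub>i\<close> alone: \<open>f\<close> is multiplication by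
  \<open>a = f z\<close>. Only finitely many coordinates of \<open>a\<close> are nonzero non-units, so for large \<open>n\<close>
  every \<open>a\<^sub>i\<close> is either a unit or satisfies \<open>a\<^sub>i\<^sup>n = 0\<close>; multiplying by the coordinatewise
  inverse of \<open>a\<close> then shows that \<open>f\<^sup>n\<close> and \<open>f\<^sup>n\<^sup>+\<^sup>1\<close> have the same image.

  \<open>G/T\<close> is torsion-free, divisible and of rank one, so each of its nonzero endomorphisms
  is onto.

  Multiplication by \<open>p\<^sub>i\<close> in coordinate \<open>i\<close> (in every coordinate for \<open>T\<close>, in coordinate \<open>n\<close>
  only for \<open>G\<close>) keeps \<open>p\<^sub>n\<^sup>n e\<^sub>n \<noteq> 0\<close> in the \<open>n\<close>-th image but kills coordinate \<open>n\<close> of the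
  next one; this refutes strong co-Hopficity of \<open>T\<close> and any uniform bound for \<open>G\<close>.
\<close>

lemma funpow_image_cong:
  assumes "\<And>x. x \<in> S \<Longrightarrow> f x = g x" "f ` S \<subseteq> S"
  shows "(f ^^ n) ` S = (g ^^ n) ` S"
proof -
  have "(f ^^ n) x = (g ^^ n) x \<and> (f ^^ n) x \<in> S" if "x \<in> S" for x
    using that by (induction n) (use assms in auto)
  then show ?thesis
    by (intro image_cong) auto
qed

lemma funpow_image_Suc_eqI:
  assumes "f ` S \<subseteq> S" "\<And>y. y \<in> S \<Longrightarrow> \<exists>x\<in>S. (f ^^ Suc n) x = (f ^^ n) y"
  shows "(f ^^ n) ` S = (f ^^ Suc n) ` S"
proof (rule equalityI)
  show "(f ^^ n) ` S \<subseteq> (f ^^ Suc n) ` S"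
  proof
    fix z assume "z \<in> (f ^^ n) ` S"
    then obtain y where "y \<in> S" "z = (f ^^ n) y"
      by blast
    then obtain x where "x \<in> S" "(f ^^ Suc n) x = z"
      using assms(2) by metis
    then show "z \<in> (f ^^ Suc n) ` S"
      by blast
  qed
  have "(f ^^ Suc n) ` S = (f ^^ n) ` f ` S"
    by (simp only: funpow_Suc_right image_comp)
  also have "\<dots> \<subseteq> (f ^^ n) ` S"
    using assms(1) by (rule image_mono)
  finally show "(f ^^ Suc n) ` S \<subseteq> (f ^^ n) ` S" .
qed

section \<open>Torsion-free divisible groups of rank one\<close>

lemma (in comm_group) nontrivial_endomorphism_surjective:
  assumes torsion_free: "\<And>x k. x \<in> carrier G \<Longrightarrow> (k::int) \<noteq> 0 \<Longrightarrow> x [^] k = \<one> \<Longrightarrow> x = \<one>"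
    and divisible: "\<And>x k. x \<in> carrier G \<Longrightarrow> (k::int) \<noteq> 0 \<Longrightarrow> \<exists>w\<in>carrier G. w [^] k = x"
    and rank_one: "\<And>x u. x \<in> carrier G \<Longrightarrow> u \<in> carrier G \<Longrightarrow> u \<noteq> \<one> \<Longrightarrow>
                     \<exists>(a::int) (b::int). a \<noteq> 0 \<and> x [^] a = u [^] b"
    and f: "f \<in> hom G G" and u: "u \<in> carrier G" "f u \<noteq> \<one>"
  shows "f ` carrier G = carrier G"
proof
  have f_pow: "f (x [^] k) = f x [^] k" if "x \<in> carrier G" for x and k :: int
    using hom_int_pow[OF f that is_group is_group] .
  have root_unique: "x = y" if "x \<in> carrier G" "y \<in> carrier G" "k \<noteq> 0" "x [^] k = y [^] k"
    for x y and k :: int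
  proof -
    have "x \<otimes> inv y \<in> carrier G"
      using that by simp
    moreover have "(x \<otimes> inv y) [^] k = \<one>"
      using that by (simp add: int_pow_distrib int_pow_inv)
    ultimately have "x \<otimes> inv y = \<one>"
      by (rule torsion_free[OF _ that(3)])
    then show "x = y"
      using that by (simp add: inv_solve_right')
  qed
  show "carrier G \<subseteq> f ` carrier G"
  proof
    fix y assume y: "y \<in> carrier G"
    have fu: "f u \<in> carrier G"
      using f u by (simp add: hom_in_carrier)
    obtain a b :: int where ab: "a \<noteq> 0" "y [^] a = f u [^] b"
      using rank_one[OF y fu u(2)] by blast
    obtain w where w: "w \<in> carrier G" "w [^] a = u"
      using divisible[OF u(1) ab(1)] by blast
    have fw: "f (w [^] b) \<in> carrier G"
      using f w by (simp add: hom_in_carrier)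
    have "f (w [^] b) [^] a = f (w [^] (b * a))"
      using w f by (simp add: f_pow int_pow_pow hom_in_carrier)
    also have "\<dots> = f ((w [^] a) [^] b)"
      using w(1) by (simp add: int_pow_pow mult.commute)
    also have "\<dots> = f u [^] b"
      by (simp only: w(2) f_pow[OF u(1)])
    also have "\<dots> = y [^] a"
      using ab(2) by simp
    finally have "f (w [^] b) = y"
      by (rule root_unique[OF fw y ab(1)])
    then show "y \<in> f ` carrier G"
      using w by blast
  qed
qed (use f in \<open>auto simp: hom_in_carrier\<close>)

lemma (in comm_group) strongly_coHopfian_if_rank_one_divisible_torsion_free:
  assumes "\<And>x k. x \<in> carrier G \<Longrightarrow> (k::int) \<noteq> 0 \<Longrightarrow> x [^] k = \<one> \<Longrightarrow> x = \<one>"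
    and "\<And>x k. x \<in> carrier G \<Longrightarrow> (k::int) \<noteq> 0 \<Longrightarrow> \<exists>w\<in>carrier G. w [^] k = x"
    and "\<And>x u. x \<in> carrier G \<Longrightarrow> u \<in> carrier G \<Longrightarrow> u \<noteq> \<one> \<Longrightarrow>
           \<exists>(a::int) (b::int). a \<noteq> 0 \<and> x [^] a = u [^] b"
  shows "strongly_coHopfian G"
  unfolding strongly_coHopfian_def
proof
  fix f assume f: "f \<in> hom G G"
  show "\<exists>n. (f ^^ n) ` carrier G = (f ^^ Suc n) ` carrier G"
  proof (cases "\<forall>x\<in>carrier G. f x = \<one>")
    case True
    then have image: "f ` carrier G = {\<one>}"
      by force
    have "(f ^^ 2) ` carrier G = f ` f ` carrier G"
      by (simp add: numeral_2_eq_2 image_comp)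
    also have "\<dots> = {\<one>}"
      using image True by auto
    finally have "(f ^^ 1) ` carrier G = (f ^^ 2) ` carrier G"
      using image by simp
    then show ?thesis
      by (metis Suc_1)
  next
    case False
    then obtain u where u: "u \<in> carrier G" "f u \<noteq> \<one>"
      by blast
    have "f ` carrier G = carrier G"
      by (rule nontrivial_endomorphism_surjective[OF assms f u])
    then show ?thesis
      by (intro exI[of _ 0]) simp
  qed
qed

lemma prime_nth_prime: "Factorial_Ring.prime (nth_prime i)"
  unfolding nth_prime_def using enumerate_in_set[OF primes_infinite] by simp

lemma prime_int_nth_prime: "Factorial_Ring.prime (int (nth_prime i))"
  using prime_nth_prime by simp

lemma inj_nth_prime: "inj nth_prime"
  unfolding nth_prime_def[abs_def] using inj_enumerate[OF primes_infinite] by simp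

lemma ord_q_eq: "ord_q i = int (nth_prime i) ^ Suc i"
  unfolding ord_q_def by simp

lemma ord_q_gt_1: "ord_q i > 1"
proof -
  have "int (nth_prime i) > 1"
    using prime_gt_1_nat[OF prime_nth_prime[of i]] by simp
  then show ?thesis
    unfolding ord_q_eq by (metis one_less_power zero_less_Suc)
qed

lemma ord_q_pos [simp]: "ord_q i > 0"
  using ord_q_gt_1[of i] by simp

lemma ord_q_nonzero [simp]: "ord_q i \<noteq> 0"
  using ord_q_gt_1[of i] by simp

lemma nth_prime_dvd_ord_q: "int (nth_prime i) dvd ord_q i"
  by (simp add: ord_q_eq)

lemma eventually_not_nth_prime_dvd:
  assumes "(k::int) \<noteq> 0"
  shows "\<forall>\<^sub>F i in cofinite. \<not> int (nth_prime i) dvd k"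
proof -
  have "{i. int (nth_prime i) dvd k} \<subseteq> nth_prime -` {..nat \<bar>k\<bar>}"
    using dvd_imp_le_int[OF assms] by fastforce
  moreover have "finite (nth_prime -` {..nat \<bar>k\<bar>})"
    by (rule finite_vimageI[OF finite_atMost inj_nth_prime])
  ultimately show ?thesis
    unfolding eventually_cofinite by (auto intro: finite_subset)
qed

lemma coprime_ord_q_iff: "coprime k (ord_q i) \<longleftrightarrow> \<not> int (nth_prime i) dvd k"
proof
  assume coprime: "coprime k (ord_q i)"
  show "\<not> int (nth_prime i) dvd k"
  proof
    assume "int (nth_prime i) dvd k"
    then have "is_unit (int (nth_prime i))"
      using coprime_common_divisor[OF coprime _ nth_prime_dvd_ord_q] by blast
    then show False
      using prime_int_nth_prime not_prime_unit by blast
  qed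
next
  assume "\<not> int (nth_prime i) dvd k"
  then show "coprime k (ord_q i)"
    unfolding ord_q_eq by (rule prime_imp_power_coprime[OF prime_int_nth_prime])
qed

lemma coprime_ord_q_ord_q:
  assumes "i \<noteq> j"
  shows "coprime (ord_q i) (ord_q j)"
proof -
  have "nth_prime i \<noteq> nth_prime j"
    using assms inj_nth_prime by (meson injD)
  then have "coprime (int (nth_prime i)) (int (nth_prime j))"
    using Factorial_Ring.primes_coprime prime_int_nth_prime by (metis of_nat_eq_iff)
  then show ?thesis
    unfolding ord_q_eq by simp
qed

section \<open>Sequences with an eventually constant multiple\<close>

definition has_const_multiple :: "(nat \<Rightarrow> int) \<Rightarrow> bool" where
  "has_const_multiple y \<longleftrightarrow>
     (\<exists>k m. k \<noteq> 0 \<and> (\<forall>\<^sub>F i in cofinite. [k * y i = m] (mod ord_q i)))"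

lemma has_const_multipleI:
  "k \<noteq> 0 \<Longrightarrow> \<forall>\<^sub>F i in cofinite. [k * y i = m] (mod ord_q i) \<Longrightarrow> has_const_multiple y"
  unfolding has_const_multiple_def by blast

lemma has_const_multipleE:
  assumes "has_const_multiple y"
  obtains k m where "k \<noteq> 0" "\<forall>\<^sub>F i in cofinite. [k * y i = m] (mod ord_q i)"
  using assms unfolding has_const_multiple_def by blast

lemma has_const_multiple_const: "has_const_multiple (\<lambda>_. c)"
  by (rule has_const_multipleI[of 1 _ c]) auto

lemma has_const_multiple_cong:
  assumes "has_const_multiple y" "\<forall>\<^sub>F i in cofinite. [y' i = y i] (mod ord_q i)"
  shows "has_const_multiple y'"
proof -
  obtain k m where "k \<noteq> 0" and km: "\<forall>\<^sub>F i in cofinite. [k * y i = m] (mod ord_q i)"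
    using assms(1) by (rule has_const_multipleE)
  have "\<forall>\<^sub>F i in cofinite. [k * y' i = m] (mod ord_q i)"
    using km assms(2) by eventually_elim (meson cong_scalar_left cong_trans)
  then show ?thesis
    using \<open>k \<noteq> 0\<close> by (rule has_const_multipleI[rotated])
qed

lemma has_const_multiple_mod_iff:
  "has_const_multiple (\<lambda>i. y i mod ord_q i) \<longleftrightarrow> has_const_multiple y"
  by (auto elim: has_const_multiple_cong)

lemma has_const_multiple_add:
  assumes "has_const_multiple x" "has_const_multiple y"
  shows "has_const_multiple (\<lambda>i. x i + y i)"
proof -
  obtain k m where k: "k \<noteq> 0" and km: "\<forall>\<^sub>F i in cofinite. [k * x i = m] (mod ord_q i)"
    using assms(1) by (rule has_const_multipleE)
  obtain k' m' where k': "k' \<noteq> 0" and km': "\<forall>\<^sub>F i in cofinite. [k' * y i = m'] (mod ord_q i)"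
    using assms(2) by (rule has_const_multipleE)
  have "\<forall>\<^sub>F i in cofinite. [(k * k') * (x i + y i) = k' * m + k * m'] (mod ord_q i)"
    using km km'
  proof eventually_elim
    case (elim i)
    have "[k' * (k * x i) + k * (k' * y i) = k' * m + k * m'] (mod ord_q i)"
      using elim by (intro cong_add cong_scalar_left)
    then show ?case
      by (simp add: algebra_simps)
  qed
  then show ?thesis
    using k k' by (intro has_const_multipleI[of "k * k'"]) auto
qed

lemma has_const_multiple_mult:
  assumes "has_const_multiple x" "has_const_multiple y"
  shows "has_const_multiple (\<lambda>i. x i * y i)"
proof -
  obtain k m where k: "k \<noteq> 0" and km: "\<forall>\<^sub>F i in cofinite. [k * x i = m] (mod ord_q i)"
    using assms(1) by (rule has_const_multipleE)
  obtain k' m' where k': "k' \<noteq> 0" and km': "\<forall>\<^sub>F i in cofinite. [k' * y i = m'] (mod ord_q i)"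
    using assms(2) by (rule has_const_multipleE)
  have "\<forall>\<^sub>F i in cofinite. [(k * k') * (x i * y i) = m * m'] (mod ord_q i)"
    using km km'
  proof eventually_elim
    case (elim i)
    have "[(k * x i) * (k' * y i) = m * m'] (mod ord_q i)"
      using elim by (rule cong_mult)
    then show ?case
      by (simp add: algebra_simps)
  qed
  then show ?thesis
    using k k' by (intro has_const_multipleI[of "k * k'"]) auto
qed

lemma has_const_multiple_cancel:
  assumes "c \<noteq> 0" "has_const_multiple (\<lambda>i. c * y i)"
  shows "has_const_multiple y"
proof -
  obtain k m where "k \<noteq> 0" and "\<forall>\<^sub>F i in cofinite. [k * (c * y i) = m] (mod ord_q i)"
    using assms(2) by (rule has_const_multipleE)
  then show ?thesis
    using assms(1) by (intro has_const_multipleI[of "k * c"]) (auto simp: mult.assoc)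
qed

lemma eventually_cong_0_cancel:
  assumes "k \<noteq> 0" "\<forall>\<^sub>F i in cofinite. [k * y i = 0] (mod ord_q i)"
  shows "\<forall>\<^sub>F i in cofinite. [y i = 0] (mod ord_q i)"
  using assms(2) eventually_not_nth_prime_dvd[OF assms(1)]
proof eventually_elim
  case (elim i)
  then show ?case
    using cong_mult_lcancel[of k "ord_q i" "y i" 0] by (simp add: coprime_ord_q_iff)
qed

lemma eventually_coprime_if_cong_const:
  assumes "m \<noteq> 0" "\<forall>\<^sub>F i in cofinite. [k * a i = m] (mod ord_q i)"
  shows "\<forall>\<^sub>F i in cofinite. coprime (a i) (ord_q i)"
  using assms(2) eventually_not_nth_prime_dvd[OF assms(1)]
proof eventually_elim
  case (elim i)
  have "[k * a i = m] (mod int (nth_prime i))"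
    using elim(1) nth_prime_dvd_ord_q by (rule cong_dvd_modulus)
  then have "\<not> int (nth_prime i) dvd a i"
    using elim(2) cong_dvd_iff by fastforce
  then show ?case
    by (simp add: coprime_ord_q_iff)
qed

lemma finite_nonunit_nonzero_coords:
  assumes "has_const_multiple a"
  shows "finite {i. int (nth_prime i) dvd a i \<and> \<not> ord_q i dvd a i}"
proof -
  obtain k m where k: "k \<noteq> 0" and km: "\<forall>\<^sub>F i in cofinite. [k * a i = m] (mod ord_q i)"
    using assms by (rule has_const_multipleE)
  have "\<forall>\<^sub>F i in cofinite. \<not> (int (nth_prime i) dvd a i \<and> \<not> ord_q i dvd a i)"
  proof (cases "m = 0")
    case True
    have "\<forall>\<^sub>F i in cofinite. [a i = 0] (mod ord_q i)"
      using eventually_cong_0_cancel[OF k] km True by simp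
    then show ?thesis
      by (rule eventually_mono) (simp add: cong_0_iff)
  next
    case False
    show ?thesis
      using eventually_coprime_if_cong_const[OF False km] by (auto simp: coprime_ord_q_iff elim: eventually_mono)
  qed
  then show ?thesis
    by (simp add: eventually_cofinite)
qed

text \<open>\<open>modular_inverse q a\<close> is \<open>0\<close> unless \<open>a\<close> is a unit modulo \<open>q\<close>.\<close>

lemma has_const_multiple_modular_inverse:
  assumes "has_const_multiple a"
  shows "has_const_multiple (\<lambda>i. modular_inverse (ord_q i) (a i))"
proof -
  obtain k m where k: "k \<noteq> 0" and km: "\<forall>\<^sub>F i in cofinite. [k * a i = m] (mod ord_q i)"
    using assms by (rule has_const_multipleE)
  show ?thesis
  proof (cases "m = 0")
    case True
    have "\<forall>\<^sub>F i in cofinite. [a i = 0] (mod ord_q i)"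
      using eventually_cong_0_cancel[OF k] km True by simp
    then have "\<forall>\<^sub>F i in cofinite. [1 * modular_inverse (ord_q i) (a i) = 0] (mod ord_q i)"
    proof (rule eventually_mono)
      fix i assume "[a i = 0] (mod ord_q i)"
      then have "\<not> coprime (ord_q i) (a i)"
        using ord_q_gt_1[of i] by (auto simp: cong_0_iff)
      then show "[1 * modular_inverse (ord_q i) (a i) = 0] (mod ord_q i)"
        by (simp add: modular_inverse_def)
    qed
    then show ?thesis
      by (rule has_const_multipleI[rotated]) simp
  next
    case False
    have "\<forall>\<^sub>F i in cofinite. [m * modular_inverse (ord_q i) (a i) = k] (mod ord_q i)"
      using km eventually_coprime_if_cong_const[OF False km]
    proof eventually_elim
      case (elim i)
      let ?s = "modular_inverse (ord_q i) (a i)"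
      have "[m * ?s = k * (a i * ?s)] (mod ord_q i)"
        using elim(1) by (metis cong_scalar_right cong_sym mult.assoc)
      moreover have "[k * (a i * ?s) = k * 1] (mod ord_q i)"
        using elim(2) by (intro cong_scalar_left cong_modular_inverse1)
      ultimately show ?case
        by (metis cong_trans mult_1_right)
    qed
    then show ?thesis
      by (rule has_const_multipleI[OF False])
  qed
qed

lemma power_absorbs_modular_inverse:
  assumes a: "has_const_multiple a"
  obtains n where "\<And>i. [a i ^ n * (a i * modular_inverse (ord_q i) (a i)) = a i ^ n] (mod ord_q i)"
proof -
  obtain N where N: "{i. int (nth_prime i) dvd a i \<and> \<not> ord_q i dvd a i} \<subseteq> {..<N}"
    using finite_nonunit_nonzero_coords[OF a] finite_nat_bounded by blast
  have "[a i ^ Suc N * (a i * modular_inverse (ord_q i) (a i)) = a i ^ Suc N] (mod ord_q i)" for i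
  proof (cases "coprime (a i) (ord_q i)")
    case True
    then have "[a i * modular_inverse (ord_q i) (a i) = 1] (mod ord_q i)"
      by (rule cong_modular_inverse1)
    then show ?thesis
      using cong_scalar_left by fastforce
  next
    case False
    then have p: "int (nth_prime i) dvd a i"
      by (simp add: coprime_ord_q_iff)
    have "ord_q i dvd a i ^ Suc N"
    proof (cases "ord_q i dvd a i")
      case True
      then show ?thesis
        by simp
    next
      case False
      then have "Suc i \<le> Suc N"
        using N p by auto
      then show ?thesis
        unfolding ord_q_eq using p by (rule dvd_power_le[rotated])
    qed
    then have "[a i ^ Suc N = 0] (mod ord_q i)"
      by (simp add: cong_0_iff)
    then show ?thesis
      by (metis cong_scalar_right cong_sym cong_trans mult_zero_left)
  qed
  then show ?thesis
    by (rule that)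
qed

lemma carrier_Pgrp: "y \<in> carrier Pgrp \<longleftrightarrow> (\<forall>i. 0 \<le> y i \<and> y i < ord_q i)"
  by (simp add: Pgrp_def)

lemma mult_Pgrp: "x \<otimes>\<^bsub>Pgrp\<^esub> y = (\<lambda>i. (x i + y i) mod ord_q i)"
  by (simp add: Pgrp_def)

lemma one_Pgrp: "\<one>\<^bsub>Pgrp\<^esub> = (\<lambda>i. 0)"
  by (simp add: Pgrp_def)

lemma mod_ord_q_in_carrier [simp]: "(\<lambda>i. f i mod ord_q i) \<in> carrier Pgrp"
  by (simp add: carrier_Pgrp)

lemma carrier_Pgrp_mod [simp]: "y \<in> carrier Pgrp \<Longrightarrow> y i mod ord_q i = y i"
  by (simp add: carrier_Pgrp)

lemma comm_group_Pgrp: "comm_group Pgrp"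
proof (rule comm_groupI)
  fix x assume x: "x \<in> carrier Pgrp"
  show "\<exists>y\<in>carrier Pgrp. y \<otimes>\<^bsub>Pgrp\<^esub> x = \<one>\<^bsub>Pgrp\<^esub>"
    by (rule bexI[of _ "\<lambda>i. (- x i) mod ord_q i"]) (auto simp: mult_Pgrp one_Pgrp mod_add_left_eq)
qed (auto simp: mult_Pgrp one_Pgrp carrier_Pgrp mod_add_left_eq mod_add_right_eq ac_simps)

lemma group_Pgrp: "group Pgrp"
  using comm_group_Pgrp by (rule comm_group.axioms(2))

lemma smulP_in_carrier [simp]: "smulP k y \<in> carrier Pgrp"
  by (simp add: smulP_def)

lemma inv_Pgrp: "y \<in> carrier Pgrp \<Longrightarrow> inv\<^bsub>Pgrp\<^esub> y = smulP (-1) y"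
  by (intro group.inv_equality group_Pgrp)
     (auto simp: smulP_def mult_Pgrp one_Pgrp mod_add_left_eq)

lemma smulP_smulP: "smulP a (smulP b x) = smulP (a * b) x"
  by (simp add: smulP_def fun_eq_iff mod_mult_right_eq mult.assoc)

lemma int_pow_Pgrp:
  assumes x: "x \<in> carrier Pgrp"
  shows "x [^]\<^bsub>Pgrp\<^esub> (k::int) = smulP k x"
proof -
  interpret comm_group Pgrp by (rule comm_group_Pgrp)
  have nat_pow: "x [^]\<^bsub>Pgrp\<^esub> n = smulP (int n) x" for n :: nat
    by (induction n)
       (use x in \<open>auto simp: one_Pgrp mult_Pgrp smulP_def mod_add_right_eq algebra_simps\<close>)
  show ?thesis
    by (cases "k < 0") (simp_all add: int_pow_def2 nat_pow inv_Pgrp smulP_smulP)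
qed

lemma zP_eq: "zP = (\<lambda>i. 1)"
  using ord_q_gt_1 by (auto simp: zP_def)

lemma Tset_iff: "y \<in> Tset \<longleftrightarrow> y \<in> carrier Pgrp \<and> (\<forall>\<^sub>F i in cofinite. y i = 0)"
  by (simp add: Tset_def eventually_cofinite)

lemma TZz_iff:
  "u \<in> TZz \<longleftrightarrow> u \<in> carrier Pgrp \<and> (\<exists>m. \<forall>\<^sub>F i in cofinite. [u i = m] (mod ord_q i))"
proof
  assume "u \<in> TZz"
  then obtain t m where u: "u = (\<lambda>i. (t i + m) mod ord_q i)" and t: "t \<in> Tset"
    unfolding TZz_def zP_eq by auto
  have "\<forall>\<^sub>F i in cofinite. [u i = m] (mod ord_q i)"
    using t unfolding Tset_iff by (auto simp: u elim: eventually_mono)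
  then show "u \<in> carrier Pgrp \<and> (\<exists>m. \<forall>\<^sub>F i in cofinite. [u i = m] (mod ord_q i))"
    unfolding u by auto
next
  assume u: "u \<in> carrier Pgrp \<and> (\<exists>m. \<forall>\<^sub>F i in cofinite. [u i = m] (mod ord_q i))"
  then obtain m where m: "\<forall>\<^sub>F i in cofinite. [u i = m] (mod ord_q i)"
    by blast
  define t where "t = (\<lambda>i. (u i - m) mod ord_q i)"
  have "t \<in> Tset"
    using m unfolding Tset_iff t_def
    by (auto simp: cong_iff_dvd_diff elim!: eventually_mono intro: dvd_imp_mod_0)
  moreover have "u = (\<lambda>i. (t i + m * zP i) mod ord_q i)"
    using u by (auto simp: t_def zP_eq mod_add_left_eq)
  ultimately show "u \<in> TZz"
    unfolding TZz_def by blast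
qed

lemma Gset_iff: "y \<in> Gset \<longleftrightarrow> y \<in> carrier Pgrp \<and> has_const_multiple y"
  unfolding Gset_def TZz_iff smulP_def has_const_multiple_def by auto

lemma Tset_subset_Gset: "Tset \<subseteq> Gset"
proof
  fix y assume y: "y \<in> Tset"
  then have "\<forall>\<^sub>F i in cofinite. [1 * y i = 0] (mod ord_q i)"
    unfolding Tset_iff by (auto elim: eventually_mono)
  then have "has_const_multiple y"
    by (rule has_const_multipleI[rotated]) simp
  then show "y \<in> Gset"
    using y by (simp add: Gset_iff Tset_iff)
qed

lemma zP_in_Gset: "zP \<in> Gset"
  by (simp add: Gset_iff zP_def has_const_multiple_mod_iff has_const_multiple_const)

definition scaleP :: "(nat \<Rightarrow> int) \<Rightarrow> (nat \<Rightarrow> int) \<Rightarrow> nat \<Rightarrow> int" where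
  "scaleP c y = (\<lambda>i. (c i * y i) mod ord_q i)"

lemma smulP_eq_scaleP: "smulP k = scaleP (\<lambda>_. k)"
  by (simp add: smulP_def scaleP_def fun_eq_iff)

lemma scaleP_in_carrier [simp]: "scaleP c y \<in> carrier Pgrp"
  by (simp add: scaleP_def)

lemma scaleP_in_Gset:
  assumes "has_const_multiple c" "y \<in> Gset"
  shows "scaleP c y \<in> Gset"
proof -
  have "has_const_multiple (\<lambda>i. c i * y i)"
    using assms by (intro has_const_multiple_mult) (simp_all add: Gset_iff)
  then show ?thesis
    unfolding Gset_iff scaleP_def by (simp add: has_const_multiple_mod_iff)
qed

lemma smulP_in_Gset: "y \<in> Gset \<Longrightarrow> smulP k y \<in> Gset"
  by (simp add: smulP_eq_scaleP scaleP_in_Gset has_const_multiple_const)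

lemma Gset_cofinite_cong:
  assumes "y \<in> Gset" "y' \<in> carrier Pgrp" "\<forall>\<^sub>F i in cofinite. [y' i = y i] (mod ord_q i)"
  shows "y' \<in> Gset"
  using assms(2) has_const_multiple_cong[OF _ assms(3)] assms(1) by (simp add: Gset_iff)

lemma Gset_pure:
  assumes "y \<in> carrier Pgrp" "c \<noteq> 0" "smulP c y \<in> Gset"
  shows "y \<in> Gset"
proof -
  have "has_const_multiple (\<lambda>i. c * y i)"
    using assms(3) by (simp add: Gset_iff smulP_def has_const_multiple_mod_iff)
  then have "has_const_multiple y"
    by (rule has_const_multiple_cancel[OF assms(2)])
  then show ?thesis
    using assms(1) by (simp add: Gset_iff)
qed

lemma subgroup_Gset: "subgroup Gset Pgrp"
proof -
  interpret comm_group Pgrp by (rule comm_group_Pgrp)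
  show ?thesis
  proof (rule subgroupI)
    show "Gset \<subseteq> carrier Pgrp" "Gset \<noteq> {}"
      using zP_in_Gset by (auto simp: Gset_iff)
  next
    fix x assume "x \<in> Gset"
    then show "inv\<^bsub>Pgrp\<^esub> x \<in> Gset"
      using inv_Pgrp smulP_in_Gset by (simp add: Gset_iff)
  next
    fix x y assume "x \<in> Gset" "y \<in> Gset"
    then show "x \<otimes>\<^bsub>Pgrp\<^esub> y \<in> Gset"
      by (simp add: Gset_iff mult_Pgrp has_const_multiple_mod_iff has_const_multiple_add)
  qed
qed

lemma carrier_Ggrp [simp]: "carrier Ggrp = Gset"
  by (simp add: Ggrp_def)

lemma mult_Ggrp [simp]: "x \<otimes>\<^bsub>Ggrp\<^esub> y = x \<otimes>\<^bsub>Pgrp\<^esub> y"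
  by (simp add: Ggrp_def)

lemma comm_group_Ggrp: "comm_group Ggrp"
proof -
  interpret comm_group Pgrp by (rule comm_group_Pgrp)
  have "group Ggrp"
    unfolding Ggrp_def by (rule subgroup_imp_group[OF subgroup_Gset])
  moreover have "x \<otimes>\<^bsub>Ggrp\<^esub> y = y \<otimes>\<^bsub>Ggrp\<^esub> x" if "x \<in> carrier Ggrp" "y \<in> carrier Ggrp" for x y
    using that m_comm[of x y] by (simp add: Gset_iff)
  ultimately show ?thesis
    by (rule group.group_comm_groupI)
qed

lemma group_Ggrp: "group Ggrp"
  using comm_group_Ggrp by (rule comm_group.axioms(2))

lemma int_pow_Ggrp: "x \<in> Gset \<Longrightarrow> x [^]\<^bsub>Ggrp\<^esub> (k::int) = smulP k x"
  using group.int_pow_consistent[OF group_Pgrp subgroup_Gset]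
    int_pow_Pgrp by (simp add: Ggrp_def Gset_iff)

lemma one_Ggrp [simp]: "\<one>\<^bsub>Ggrp\<^esub> = (\<lambda>i. 0)"
  by (simp add: Ggrp_def one_Pgrp)

lemma inv_Ggrp: "y \<in> Gset \<Longrightarrow> inv\<^bsub>Ggrp\<^esub> y = smulP (-1) y"
  using group.m_inv_consistent[OF group_Pgrp subgroup_Gset]
  by (simp add: Ggrp_def inv_Pgrp Gset_iff)

lemma funpow_scaleP:
  assumes "y \<in> carrier Pgrp"
  shows "(scaleP c ^^ n) y = scaleP (\<lambda>i. c i ^ n) y"
proof (induction n)
  case 0
  show ?case
    using assms by (simp add: scaleP_def)
next
  case (Suc n)
  then show ?case
    by (simp add: scaleP_def mod_mult_right_eq mult.assoc)
qed

lemma scaleP_hom: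
  assumes "S \<subseteq> carrier Pgrp" "\<And>y. y \<in> S \<Longrightarrow> scaleP c y \<in> S"
  shows "scaleP c \<in> hom (Pgrp\<lparr>carrier := S\<rparr>) (Pgrp\<lparr>carrier := S\<rparr>)"
  using assms
  by (intro homI) (auto simp: mult_Pgrp scaleP_def fun_eq_iff mod_mult_right_eq mod_add_eq distrib_left)

section \<open>Multiplication by \<open>p\<^sub>n\<close> in coordinate \<open>n\<close>\<close>

definition unit_vec :: "nat \<Rightarrow> nat \<Rightarrow> int" where
  "unit_vec n = (\<lambda>i. if i = n then 1 else 0)"

lemma unit_vec_in_Tset: "unit_vec n \<in> Tset"
proof -
  have "unit_vec n \<in> carrier Pgrp"
    using ord_q_gt_1 by (auto simp: carrier_Pgrp unit_vec_def)
  moreover have "finite {i. unit_vec n i \<noteq> 0}"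
    by (rule finite_subset[of _ "{n}"]) (auto simp: unit_vec_def)
  ultimately show ?thesis
    by (simp add: Tset_def)
qed

lemma unit_vec_in_Gset: "unit_vec n \<in> Gset"
  using Tset_subset_Gset unit_vec_in_Tset by blast

lemma funpow_scaleP_images_differ:
  assumes S: "S \<subseteq> carrier Pgrp" "unit_vec n \<in> S" and c: "c n = int (nth_prime n)"
  shows "(scaleP c ^^ n) ` S \<noteq> (scaleP c ^^ Suc n) ` S"
proof
  let ?p = "int (nth_prime n)"
  assume "(scaleP c ^^ n) ` S = (scaleP c ^^ Suc n) ` S"
  then obtain x where x: "x \<in> S" "(scaleP c ^^ Suc n) x = (scaleP c ^^ n) (unit_vec n)"
    using S(2) by (metis imageE image_eqI)
  have "(scaleP c ^^ Suc n) x n = 0"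
    using x(1) S(1) c by (auto simp: funpow_scaleP scaleP_def ord_q_eq)
  moreover have "(scaleP c ^^ n) (unit_vec n) n = ?p ^ n"
  proof -
    have "?p > 1"
      using prime_gt_1_nat[OF prime_nth_prime[of n]] by simp
    then have "?p ^ n < ?p ^ Suc n"
      by simp
    then show ?thesis
      using S c by (auto simp: funpow_scaleP scaleP_def ord_q_eq unit_vec_def)
  qed
  moreover have "?p ^ n \<noteq> 0"
    using prime_gt_1_nat[OF prime_nth_prime[of n]] by simp
  ultimately show False
    using x(2) by simp
qed

theorem not_strongly_coHopfian_Tgrp: "\<not> strongly_coHopfian Tgrp"
proof -
  let ?f = "scaleP (\<lambda>i. int (nth_prime i))"
  have T: "Tset \<subseteq> carrier Pgrp"
    by (auto simp: Tset_iff)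
  have "?f y \<in> Tset" if "y \<in> Tset" for y
    using that by (auto simp: Tset_iff scaleP_def elim: eventually_mono)
  then have "?f \<in> hom Tgrp Tgrp"
    unfolding Tgrp_def using T by (intro scaleP_hom)
  moreover have "(?f ^^ n) ` Tset \<noteq> (?f ^^ Suc n) ` Tset" for n
    using T unit_vec_in_Tset by (rule funpow_scaleP_images_differ) simp
  ultimately show ?thesis
    unfolding strongly_coHopfian_def by (auto simp: Tgrp_def)
qed

theorem not_uniformly_strongly_coHopfian_Ggrp: "\<not> uniformly_strongly_coHopfian Ggrp"
proof
  assume "uniformly_strongly_coHopfian Ggrp"
  then obtain n where n: "\<And>f. f \<in> hom Ggrp Ggrp \<Longrightarrow> (f ^^ n) ` Gset = (f ^^ Suc n) ` Gset"
    unfolding uniformly_strongly_coHopfian_def carrier_Ggrp by blast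
  define c where "c i = (if i = n then int (nth_prime n) else 1)" for i
  have "\<forall>\<^sub>F i in cofinite. [c i = 1] (mod ord_q i)"
    unfolding eventually_cofinite c_def by (rule finite_subset[of _ "{n}"]) auto
  then have "has_const_multiple c"
    by (rule has_const_multiple_cong[OF has_const_multiple_const])
  have G: "Gset \<subseteq> carrier Pgrp"
    by (auto simp: Gset_iff)
  have "scaleP c \<in> hom Ggrp Ggrp"
    unfolding Ggrp_def using G by (rule scaleP_hom) (rule scaleP_in_Gset[OF \<open>has_const_multiple c\<close>])
  moreover have "(scaleP c ^^ n) ` Gset \<noteq> (scaleP c ^^ Suc n) ` Gset"
    by (rule funpow_scaleP_images_differ[OF G unit_vec_in_Gset]) (simp add: c_def)
  ultimately show False
    using n by blast
qed

section \<open>Endomorphisms of \<open>G\<close>\<close>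

lemma hom_Ggrp_smulP:
  assumes f: "f \<in> hom Ggrp Ggrp" and x: "x \<in> Gset"
  shows "f (smulP k x) = smulP k (f x)"
proof -
  have "f (x [^]\<^bsub>Ggrp\<^esub> k) = f x [^]\<^bsub>Ggrp\<^esub> k"
    using hom_int_pow[OF f _ group_Ggrp group_Ggrp] x by simp
  then show ?thesis
    using hom_in_carrier[OF f] x by (simp add: int_pow_Ggrp)
qed

lemma Gset_divisible_by_ord_q:
  assumes y: "y \<in> Gset" "y i = 0"
  shows "\<exists>v\<in>Gset. smulP (ord_q i) v = y"
proof -
  define v where "v = scaleP (\<lambda>j. modular_inverse (ord_q j) (ord_q i)) y"
  have "smulP (ord_q i) v = y"
  proof
    fix j
    show "smulP (ord_q i) v j = y j"
    proof (cases "j = i")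
      case True
      then show ?thesis
        using y(2) by (simp add: smulP_def v_def scaleP_def)
    next
      case False
      then have "[ord_q i * modular_inverse (ord_q j) (ord_q i) = 1] (mod ord_q j)"
        by (intro cong_modular_inverse1 coprime_ord_q_ord_q) simp
      then have "[ord_q i * modular_inverse (ord_q j) (ord_q i) * y j = y j] (mod ord_q j)"
        using cong_scalar_right by fastforce
      then show ?thesis
        using y(1) by (simp add: smulP_def v_def scaleP_def cong_def mod_mult_right_eq mult.assoc Gset_iff)
    qed
  qed
  moreover have "v \<in> Gset"
    by (rule Gset_pure[of v "ord_q i"]) (use calculation y(1) in \<open>simp_all add: v_def\<close>)
  ultimately show ?thesis
    by blast
qed

lemma hom_Ggrp_coord:
  assumes f: "f \<in> hom Ggrp Ggrp" and y: "y \<in> Gset"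
  shows "f y i = (f (unit_vec i) i * y i) mod ord_q i"
proof -
  define w where "w = y(i := 0)"
  have w: "w \<in> Gset"
  proof (rule Gset_cofinite_cong[OF y])
    show "w \<in> carrier Pgrp"
      using y by (auto simp: w_def Gset_iff carrier_Pgrp)
    show "\<forall>\<^sub>F j in cofinite. [w j = y j] (mod ord_q j)"
      unfolding eventually_cofinite w_def by (rule finite_subset[of _ "{i}"]) auto
  qed
  have "w i = 0"
    by (simp add: w_def)
  then obtain v where v: "v \<in> Gset" "smulP (ord_q i) v = w"
    using Gset_divisible_by_ord_q[OF w] by blast
  have "f w = smulP (ord_q i) (f v)"
    using hom_Ggrp_smulP[OF f v(1), of "ord_q i"] unfolding v(2) .
  then have fw: "f w i = 0"
    by (simp add: smulP_def)
  have "y = w \<otimes>\<^bsub>Pgrp\<^esub> smulP (y i) (unit_vec i)"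
    using y by (auto simp: mult_Pgrp smulP_def unit_vec_def w_def Gset_iff)
  then have "f y = f w \<otimes>\<^bsub>Pgrp\<^esub> smulP (y i) (f (unit_vec i))"
    using hom_mult[OF f] w unit_vec_in_Gset smulP_in_Gset hom_Ggrp_smulP[OF f unit_vec_in_Gset]
    by (metis carrier_Ggrp mult_Ggrp)
  then have "f y i = (y i * f (unit_vec i) i) mod ord_q i"
    using fw by (simp add: mult_Pgrp smulP_def)
  then show ?thesis
    by (simp add: mult.commute)
qed

lemma hom_Ggrp_eq_scaleP:
  assumes f: "f \<in> hom Ggrp Ggrp" and y: "y \<in> Gset"
  shows "f y = scaleP (f zP) y"
proof
  fix i
  have "f (unit_vec i) \<in> carrier Pgrp"
    using hom_in_carrier[OF f] unit_vec_in_Gset by (simp add: Gset_iff)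
  then have "f zP i = f (unit_vec i) i"
    using hom_Ggrp_coord[OF f zP_in_Gset, of i] by (simp add: zP_eq)
  then show "f y i = scaleP (f zP) y i"
    using hom_Ggrp_coord[OF f y, of i] by (simp add: scaleP_def)
qed

lemma funpow_scaleP_images_stabilize:
  assumes a: "has_const_multiple a"
  shows "\<exists>n. (scaleP a ^^ n) ` Gset = (scaleP a ^^ Suc n) ` Gset"
proof -
  define s where "s i = modular_inverse (ord_q i) (a i)" for i
  obtain n where key: "\<And>i. [a i ^ n * (a i * s i) = a i ^ n] (mod ord_q i)"
    using power_absorbs_modular_inverse[OF a] unfolding s_def by metis
  have "(scaleP a ^^ n) ` Gset = (scaleP a ^^ Suc n) ` Gset"
  proof (rule funpow_image_Suc_eqI)
    show "scaleP a ` Gset \<subseteq> Gset"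
      using scaleP_in_Gset[OF a] by blast
    fix y assume y: "y \<in> Gset"
    have "scaleP s y \<in> Gset"
      unfolding s_def using has_const_multiple_modular_inverse[OF a] y by (rule scaleP_in_Gset)
    moreover have "(scaleP a ^^ Suc n) (scaleP s y) = (scaleP a ^^ n) y"
    proof
      fix i
      have y_carrier: "y \<in> carrier Pgrp"
        using y by (simp add: Gset_iff)
      have "[a i ^ Suc n * (s i * y i) = a i ^ n * y i] (mod ord_q i)"
        using cong_scalar_right[OF key, of i "y i"] by (simp add: ac_simps)
      then show "(scaleP a ^^ Suc n) (scaleP s y) i = (scaleP a ^^ n) y i"
        unfolding funpow_scaleP[OF scaleP_in_carrier] funpow_scaleP[OF y_carrier]
        by (simp add: scaleP_def cong_def mod_mult_right_eq)
    qed
    ultimately show "\<exists>x\<in>Gset. (scaleP a ^^ Suc n) x = (scaleP a ^^ n) y"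
      by blast
  qed
  then show ?thesis ..
qed

theorem strongly_coHopfian_Ggrp: "strongly_coHopfian Ggrp"
  unfolding strongly_coHopfian_def carrier_Ggrp
proof
  fix f assume f: "f \<in> hom Ggrp Ggrp"
  have "has_const_multiple (f zP)"
    using hom_in_carrier[OF f zP_in_Gset[folded carrier_Ggrp]] by (simp add: Gset_iff)
  then obtain n where n: "(scaleP (f zP) ^^ n) ` Gset = (scaleP (f zP) ^^ Suc n) ` Gset"
    using funpow_scaleP_images_stabilize by blast
  have same: "(f ^^ k) ` Gset = (scaleP (f zP) ^^ k) ` Gset" for k
  proof (rule funpow_image_cong)
    show "f x = scaleP (f zP) x" if "x \<in> Gset" for x
      using f that by (rule hom_Ggrp_eq_scaleP)
    show "f ` Gset \<subseteq> Gset"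
      using hom_in_carrier[OF f] by auto
  qed
  show "\<exists>n. (f ^^ n) ` Gset = (f ^^ Suc n) ` Gset"
    unfolding same using n by (rule exI)
qed

section \<open>The quotient \<open>G/T\<close>\<close>

lemma subgroup_Tset: "subgroup Tset Pgrp"
proof -
  interpret comm_group Pgrp by (rule comm_group_Pgrp)
  show ?thesis
  proof (rule subgroupI)
    show "Tset \<subseteq> carrier Pgrp"
      by (auto simp: Tset_iff)
    have "\<one>\<^bsub>Pgrp\<^esub> \<in> Tset"
      by (simp add: Tset_iff one_Pgrp carrier_Pgrp)
    then show "Tset \<noteq> {}"
      by blast
  next
    fix x assume x: "x \<in> Tset"
    then have "\<forall>\<^sub>F i in cofinite. x i = 0"
      by (simp add: Tset_iff)
    then have "\<forall>\<^sub>F i in cofinite. smulP (-1) x i = 0"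
      by (rule eventually_mono) (simp add: smulP_def)
    then show "inv\<^bsub>Pgrp\<^esub> x \<in> Tset"
      using x by (simp add: Tset_iff inv_Pgrp)
  next
    fix x y assume x: "x \<in> Tset" and y: "y \<in> Tset"
    then have "\<forall>\<^sub>F i in cofinite. x i = 0 \<and> y i = 0"
      by (simp add: Tset_iff eventually_conj_iff)
    then have "\<forall>\<^sub>F i in cofinite. (x \<otimes>\<^bsub>Pgrp\<^esub> y) i = 0"
      by (rule eventually_mono) (simp add: mult_Pgrp)
    then show "x \<otimes>\<^bsub>Pgrp\<^esub> y \<in> Tset"
      by (simp add: Tset_iff mult_Pgrp)
  qed
qed

lemma subgroup_Tset_Ggrp: "subgroup Tset Ggrp"
proof -
  interpret comm_group Pgrp by (rule comm_group_Pgrp)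
  show ?thesis
    unfolding Ggrp_def by (rule subgroup_incl[OF subgroup_Tset subgroup_Gset Tset_subset_Gset])
qed

lemma comm_group_quotient: "comm_group (Ggrp Mod Tset)"
  by (rule comm_group.abelian_FactGroup[OF comm_group_Ggrp subgroup_Tset_Ggrp])

lemma carrier_quotient: "carrier (Ggrp Mod Tset) = (\<lambda>x. Tset #>\<^bsub>Ggrp\<^esub> x) ` Gset"
  unfolding carrier_FactGroup carrier_Ggrp ..

lemma rcos_Tset_eq_iff:
  assumes x: "x \<in> Gset" and y: "y \<in> Gset"
  shows "Tset #>\<^bsub>Ggrp\<^esub> x = Tset #>\<^bsub>Ggrp\<^esub> y \<longleftrightarrow> (\<forall>\<^sub>F i in cofinite. [x i = y i] (mod ord_q i))"
proof -
  interpret comm_group Ggrp by (rule comm_group_Ggrp)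
  have xy: "x \<in> carrier Ggrp" "y \<in> carrier Ggrp"
    using x y by simp_all
  have "Tset #>\<^bsub>Ggrp\<^esub> x = Tset #>\<^bsub>Ggrp\<^esub> y \<longleftrightarrow> x \<in> Tset #>\<^bsub>Ggrp\<^esub> y"
    using repr_independence[OF _ xy(2) subgroup_Tset_Ggrp] repr_independence[OF _ xy(1) subgroup_Tset_Ggrp]
      rcos_self[OF xy(1) subgroup_Tset_Ggrp] by blast
  also have "\<dots> \<longleftrightarrow> x \<otimes>\<^bsub>Ggrp\<^esub> inv\<^bsub>Ggrp\<^esub> y \<in> Tset"
    by (rule subgroup.rcos_module[OF subgroup_Tset_Ggrp is_group xy(2) xy(1)])
  also have "\<dots> \<longleftrightarrow> (\<forall>\<^sub>F i in cofinite. [x i = y i] (mod ord_q i))"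
    using y by (simp add: inv_Ggrp Tset_iff mult_Pgrp smulP_def mod_add_right_eq
        cong_iff_dvd_diff mod_eq_0_iff_dvd)
  finally show ?thesis .
qed

lemma rcos_Tset_eq_Tset_iff:
  assumes x: "x \<in> Gset"
  shows "Tset #>\<^bsub>Ggrp\<^esub> x = Tset \<longleftrightarrow> (\<forall>\<^sub>F i in cofinite. [x i = 0] (mod ord_q i))"
proof -
  have zero: "(\<lambda>i. 0) \<in> Gset"
    using subgroup.one_closed[OF subgroup_Gset] by (simp add: one_Pgrp)
  have "Tset #>\<^bsub>Ggrp\<^esub> (\<lambda>i. 0) = Tset"
    using group.coset_mult_one[OF group_Ggrp, of Tset] Tset_subset_Gset by simp
  then show ?thesis
    using rcos_Tset_eq_iff[OF x zero] by simp
qed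

lemma rcos_Tset_int_pow:
  "x \<in> Gset \<Longrightarrow> (Tset #>\<^bsub>Ggrp\<^esub> x) [^]\<^bsub>Ggrp Mod Tset\<^esub> (k::int) = Tset #>\<^bsub>Ggrp\<^esub> smulP k x"
  using normal.FactGroup_int_pow[OF comm_group.subgroup_imp_normal[OF comm_group_Ggrp subgroup_Tset_Ggrp]]
  by (simp add: int_pow_Ggrp)

lemma quotient_torsion_free:
  assumes "A \<in> carrier (Ggrp Mod Tset)" "k \<noteq> 0" "A [^]\<^bsub>Ggrp Mod Tset\<^esub> (k::int) = \<one>\<^bsub>Ggrp Mod Tset\<^esub>"
  shows "A = \<one>\<^bsub>Ggrp Mod Tset\<^esub>"
proof -
  obtain x where x: "x \<in> Gset" "A = Tset #>\<^bsub>Ggrp\<^esub> x"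
    using assms(1) by (auto simp: carrier_quotient)
  have "Tset #>\<^bsub>Ggrp\<^esub> smulP k x = Tset"
    using assms(3) x by (simp add: rcos_Tset_int_pow)
  then have "\<forall>\<^sub>F i in cofinite. [k * x i = 0] (mod ord_q i)"
    unfolding rcos_Tset_eq_Tset_iff[OF smulP_in_Gset[OF x(1)]] by (simp add: smulP_def)
  then show ?thesis
    using x by (simp add: rcos_Tset_eq_Tset_iff eventually_cong_0_cancel[OF assms(2)])
qed

lemma quotient_divisible:
  assumes "A \<in> carrier (Ggrp Mod Tset)" "k \<noteq> 0"
  shows "\<exists>C\<in>carrier (Ggrp Mod Tset). C [^]\<^bsub>Ggrp Mod Tset\<^esub> (k::int) = A"
proof -
  obtain x where x: "x \<in> Gset" "A = Tset #>\<^bsub>Ggrp\<^esub> x"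
    using assms(1) by (auto simp: carrier_quotient)
  define w where "w = scaleP (\<lambda>i. modular_inverse (ord_q i) k) x"
  have kw: "\<forall>\<^sub>F i in cofinite. [smulP k w i = x i] (mod ord_q i)"
    using eventually_not_nth_prime_dvd[OF assms(2)]
  proof eventually_elim
    case (elim i)
    then have "[k * modular_inverse (ord_q i) k = 1] (mod ord_q i)"
      by (simp add: cong_modular_inverse1 coprime_ord_q_iff)
    then have "[k * modular_inverse (ord_q i) k * x i = x i] (mod ord_q i)"
      using cong_scalar_right by fastforce
    then show ?case
      by (simp add: w_def smulP_def scaleP_def mod_mult_right_eq mult.assoc)
  qed
  then have "smulP k w \<in> Gset"
    by (rule Gset_cofinite_cong[OF x(1) smulP_in_carrier])
  then have w: "w \<in> Gset"
    using Gset_pure[of w k] assms(2) by (simp add: w_def)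
  have "(Tset #>\<^bsub>Ggrp\<^esub> w) [^]\<^bsub>Ggrp Mod Tset\<^esub> k = A"
    using kw w x by (simp add: rcos_Tset_int_pow rcos_Tset_eq_iff smulP_in_Gset)
  then show ?thesis
    using w by (auto simp: carrier_quotient)
qed

lemma quotient_rank_one:
  assumes "A \<in> carrier (Ggrp Mod Tset)" "B \<in> carrier (Ggrp Mod Tset)" "B \<noteq> \<one>\<^bsub>Ggrp Mod Tset\<^esub>"
  shows "\<exists>(a::int) (b::int). a \<noteq> 0 \<and> A [^]\<^bsub>Ggrp Mod Tset\<^esub> a = B [^]\<^bsub>Ggrp Mod Tset\<^esub> b"
proof -
  obtain x where x: "x \<in> Gset" "A = Tset #>\<^bsub>Ggrp\<^esub> x"
    using assms(1) by (auto simp: carrier_quotient)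
  obtain u where u: "u \<in> Gset" "B = Tset #>\<^bsub>Ggrp\<^esub> u"
    using assms(2) by (auto simp: carrier_quotient)
  obtain k m where k: "k \<noteq> 0" and km: "\<forall>\<^sub>F i in cofinite. [k * x i = m] (mod ord_q i)"
    using x(1) by (auto simp: Gset_iff elim: has_const_multipleE)
  obtain k' m' where k': "k' \<noteq> 0" and km': "\<forall>\<^sub>F i in cofinite. [k' * u i = m'] (mod ord_q i)"
    using u(1) by (auto simp: Gset_iff elim: has_const_multipleE)
  have "m' \<noteq> 0"
  proof
    assume "m' = 0"
    then have "\<forall>\<^sub>F i in cofinite. [u i = 0] (mod ord_q i)"
      using eventually_cong_0_cancel[OF k'] km' by simp
    then show False
      using assms(3) u by (simp add: rcos_Tset_eq_Tset_iff)
  qed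
  have "\<forall>\<^sub>F i in cofinite. [m' * k * x i = m * k' * u i] (mod ord_q i)"
    using km km'
  proof eventually_elim
    case (elim i)
    have "[m' * (k * x i) = m' * m] (mod ord_q i)"
      using elim(1) by (rule cong_scalar_left)
    moreover have "[m * (k' * u i) = m * m'] (mod ord_q i)"
      using elim(2) by (rule cong_scalar_left)
    ultimately show ?case
      by (metis cong_sym cong_trans mult.assoc mult.commute)
  qed
  then have "Tset #>\<^bsub>Ggrp\<^esub> smulP (m' * k) x = Tset #>\<^bsub>Ggrp\<^esub> smulP (m * k') u"
    unfolding rcos_Tset_eq_iff[OF smulP_in_Gset[OF x(1)] smulP_in_Gset[OF u(1)]]
    by (simp add: smulP_def)
  then have "A [^]\<^bsub>Ggrp Mod Tset\<^esub> (m' * k) = B [^]\<^bsub>Ggrp Mod Tset\<^esub> (m * k')"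
    using x u by (simp add: rcos_Tset_int_pow)
  then show ?thesis
    using \<open>m' \<noteq> 0\<close> k by (intro exI conjI) simp_all
qed

theorem strongly_coHopfian_quotient: "strongly_coHopfian (Ggrp Mod Tset)"
  using comm_group.strongly_coHopfian_if_rank_one_divisible_torsion_free[OF comm_group_quotient
      quotient_torsion_free quotient_divisible quotient_rank_one] .

theorem mainTheorem15:
  shows "strongly_coHopfian Ggrp \<and> strongly_coHopfian (Ggrp Mod Tset)
         \<and> \<not> strongly_coHopfian Tgrp \<and> \<not> uniformly_strongly_coHopfian Ggrp"
  using strongly_coHopfian_Ggrp strongly_coHopfian_quotient not_strongly_coHopfian_Tgrp
    not_uniformly_strongly_coHopfian_Ggrp by blast

end
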